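(* A binary PS-algebra $\langle A,f,g\rangle$ satisfies (wMIA): for all $x,y\in A$, if $x\neq0$ and $y\neq0$ then $g(x,y)\leq f(x,y)$, if and only if $S_g\subseteq Q_f$. In particular, for every betweenness frame $\mathfrak F=\langle U,B\rangle$, the full complex algebra $\langle 2^U,\langle B\rangle,[\![B]\!]\rangle$ satisfies $S_{[\![B]\!]}\subseteq Q_{\langle B\rangle}$.
   Context: A PS-algebra is $\langle A,f,g\rangle$ where $A$ is a Boolean algebra with at least two elements and $f,g\colon A^2\to A$ satisfy: $f(x,y)=0$ whenever $x=0$ or $y=0$; $f$ additive in each argument; $g(x,y)=1$ whenever $x=0$ or $y=0$; $g$ co-additive in each argument ($g(x+x',y)=g(x,y)\cdot g(x',y)$, $g(x,y+y')=g(x,y)\cdot g(x,y')$). On the set $\mathrm{Ult}(A)$ of ultrafilters define ternary relations $Q_f(\mathcal U_1,\mathcal U_2,\mathcal U_3)\iff f[\mathcal U_1\times\mathcal U_3]\subseteq\mathcal U_2$ and $S_g(\mathcal U_1,\mathcal U_2,\mathcal U_3)\iff g[\mathcal U_1\times\mathcal U_3]\cap\mathcal U_2\neq\emptyset$. A betweenness frame is $\langle U,B\rangle$, $U\neq\emptyset$, $B\subseteq U^3$, with, for all $a,b,c$: $B(a,a,a)$; $B(a,b,c)\Rightarrow B(c,b,a)$; $B(a,b,c)\Rightarrow B(a,a,b)$; $B(a,b,c)\wedge B(a,c,b)\Rightarrow b=c$. Its complex operators on $2^U$ are $\langle B\rangle(X,Y)=\{u\mid\exists x\in X\,\exists y\in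 Y\,B(x,u,y)\}$ and $[\![B]\!](X,Y)=\{u\mid\forall x\in X\,\forall y\in Y\,B(x,u,y)\}$. *)

theory Defs
  imports Main
begin

text \<open>Boolean algebras are taken as the type class boolean_algebra; 0 = bot, 1 = top,
  + = sup, \<cdot> = inf, order = the lattice order.\<close>

definition PS_algebra :: "('a::boolean_algebra \<Rightarrow> 'a \<Rightarrow> 'a) \<Rightarrow> ('a \<Rightarrow> 'a \<Rightarrow> 'a) \<Rightarrow> bool" where
  "PS_algebra f g \<longleftrightarrow>
     (bot::'a) \<noteq> top \<and>
     (\<forall>x y. (x = bot \<or> y = bot) \<longrightarrow> f x y = bot) \<and>
     (\<forall>x x' y. f (sup x x') y = sup (f x y) (f x' y)) \<and>
     (\<forall>x y y'. f x (sup y y') = sup (f x y) (f x y')) \<and>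
     (\<forall>x y. (x = bot \<or> y = bot) \<longrightarrow> g x y = top) \<and>
     (\<forall>x x' y. g (sup x x') y = inf (g x y) (g x' y)) \<and>
     (\<forall>x y y'. g x (sup y y') = inf (g x y) (g x y'))"

definition ultrafilter :: "'a::boolean_algebra set \<Rightarrow> bool" where
  "ultrafilter F \<longleftrightarrow>
     top \<in> F \<and> bot \<notin> F \<and>
     (\<forall>x y. x \<in> F \<and> x \<le> y \<longrightarrow> y \<in> F) \<and>
     (\<forall>x y. x \<in> F \<and> y \<in> F \<longrightarrow> inf x y \<in> F) \<and>
     (\<forall>x. x \<in> F \<or> - x \<in> F)"

definition Ult :: "'a::boolean_algebra set set" where
  "Ult = {F. ultrafilter F}"

definition Q_rel :: "('a::boolean_algebra \<Rightarrow> 'a \<Rightarrow> 'a) \<Rightarrow> 'a set \<Rightarrow> 'a set \<Rightarrow> 'a set \<Rightarrow> bool" where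
  "Q_rel f U1 U2 U3 \<longleftrightarrow> {f x y | x y. x \<in> U1 \<and> y \<in> U3} \<subseteq> U2"

definition S_rel :: "('a::boolean_algebra \<Rightarrow> 'a \<Rightarrow> 'a) \<Rightarrow> 'a set \<Rightarrow> 'a set \<Rightarrow> 'a set \<Rightarrow> bool" where
  "S_rel g U1 U2 U3 \<longleftrightarrow> {g x y | x y. x \<in> U1 \<and> y \<in> U3} \<inter> U2 \<noteq> {}"

definition S_sub_Q :: "('a::boolean_algebra \<Rightarrow> 'a \<Rightarrow> 'a) \<Rightarrow> ('a \<Rightarrow> 'a \<Rightarrow> 'a) \<Rightarrow> bool" where
  "S_sub_Q g f \<longleftrightarrow> (\<forall>U1\<in>Ult. \<forall>U2\<in>Ult. \<forall>U3\<in>Ult. S_rel g U1 U2 U3 \<longrightarrow> Q_rel f U1 U2 U3)"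

definition wMIA :: "('a::boolean_algebra \<Rightarrow> 'a \<Rightarrow> 'a) \<Rightarrow> ('a \<Rightarrow> 'a \<Rightarrow> 'a) \<Rightarrow> bool" where
  "wMIA f g \<longleftrightarrow> (\<forall>x y. x \<noteq> bot \<and> y \<noteq> bot \<longrightarrow> g x y \<le> f x y)"

definition betweenness_frame :: "'u set \<Rightarrow> ('u \<Rightarrow> 'u \<Rightarrow> 'u \<Rightarrow> bool) \<Rightarrow> bool" where
  "betweenness_frame U B \<longleftrightarrow> U \<noteq> {} \<and>
     (\<forall>a b c. B a b c \<longrightarrow> a \<in> U \<and> b \<in> U \<and> c \<in> U) \<and>
     (\<forall>a\<in>U. B a a a) \<and>
     (\<forall>a\<in>U. \<forall>b\<in>U. \<forall>c\<in>U. B a b c \<longrightarrow> B c b a) \<and>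
     (\<forall>a\<in>U. \<forall>b\<in>U. \<forall>c\<in>U. B a b c \<longrightarrow> B a a b) \<and>
     (\<forall>a\<in>U. \<forall>b\<in>U. \<forall>c\<in>U. B a b c \<and> B a c b \<longrightarrow> b = c)"

definition diamB :: "('u \<Rightarrow> 'u \<Rightarrow> 'u \<Rightarrow> bool) \<Rightarrow> 'u set \<Rightarrow> 'u set \<Rightarrow> 'u set" where
  "diamB B X Y = {u. \<exists>x\<in>X. \<exists>y\<in>Y. B x u y}"

definition boxB :: "('u \<Rightarrow> 'u \<Rightarrow> 'u \<Rightarrow> bool) \<Rightarrow> 'u set \<Rightarrow> 'u set \<Rightarrow> 'u set" where
  "boxB B X Y = {u. \<forall>x\<in>X. \<forall>y\<in>Y. B x u y}"

end

theory Submission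
  imports Defs
begin

text \<open>If (wMIA) holds and \<open>g a b \<in> U\<^sub>2\<close> with \<open>a \<in> U\<^sub>1\<close>, \<open>b \<in> U\<^sub>3\<close>, then for all
  \<open>x \<in> U\<^sub>1\<close>, \<open>y \<in> U\<^sub>3\<close> the nonzero elements \<open>x \<sqinter> a\<close>, \<open>y \<sqinter> b\<close> give
  \<open>g a b \<le> g (x \<sqinter> a) (y \<sqinter> b) \<le> f (x \<sqinter> a) (y \<sqinter> b) \<le> f x y\<close> by the (anti)monotonicity of
  \<open>g\<close> and \<open>f\<close>, so \<open>f x y \<in> U\<^sub>2\<close>. Conversely, if \<open>g x y \<not>\<le> f x y\<close> for nonzero \<open>x\<close>, \<open>y\<close>, the
  ultrafilter theorem yields ultrafilters containing \<open>x\<close>, \<open>y\<close> and \<open>g x y \<sqinter> - f x y\<close>, which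
  are related by \<open>S\<^sub>g\<close> but not by \<open>Q\<^sub>f\<close>.\<close>

definition proper_filter :: "'a::boolean_algebra set \<Rightarrow> bool" where
  "proper_filter F \<longleftrightarrow>
     top \<in> F \<and> bot \<notin> F \<and>
     (\<forall>x y. x \<in> F \<and> x \<le> y \<longrightarrow> y \<in> F) \<and>
     (\<forall>x y. x \<in> F \<and> y \<in> F \<longrightarrow> inf x y \<in> F)"

lemma ultrafilter_iff_proper_filter:
  "ultrafilter F \<longleftrightarrow> proper_filter F \<and> (\<forall>x. x \<in> F \<or> - x \<in> F)"
  unfolding ultrafilter_def proper_filter_def by blast

lemma proper_filterD:
  assumes "proper_filter F"
  shows proper_filter_top: "top \<in> F"
    and proper_filter_bot: "bot \<notin> F"
    and proper_filter_upward: "x \<in> F \<Longrightarrow> x \<le> y \<Longrightarrow> y \<in> F"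
    and proper_filter_inf: "x \<in> F \<Longrightarrow> y \<in> F \<Longrightarrow> inf x y \<in> F"
  using assms unfolding proper_filter_def by blast+

lemma ultrafilter_is_proper_filter: "ultrafilter F \<Longrightarrow> proper_filter F"
  unfolding ultrafilter_iff_proper_filter by blast

lemma ultrafilter_inf_iff:
  assumes "ultrafilter F"
  shows "inf x y \<in> F \<longleftrightarrow> x \<in> F \<and> y \<in> F"
  using ultrafilter_is_proper_filter[OF assms]
  by (meson inf_le1 inf_le2 proper_filter_inf proper_filter_upward)

lemma ultrafilter_compl_iff:
  assumes "ultrafilter F"
  shows "- x \<in> F \<longleftrightarrow> x \<notin> F"
  using assms ultrafilter_inf_iff[OF assms, of x "- x"] unfolding ultrafilter_def by auto

lemma proper_filter_Union_chain:
  assumes "C \<noteq> {}" "\<And>F. F \<in> C \<Longrightarrow> proper_filter F"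
    and chain: "\<And>F G. F \<in> C \<Longrightarrow> G \<in> C \<Longrightarrow> F \<subseteq> G \<or> G \<subseteq> F"
  shows "proper_filter (\<Union>C)"
  unfolding proper_filter_def
proof (intro conjI allI impI)
  show "top \<in> \<Union>C" "bot \<notin> \<Union>C"
    using assms(1,2) proper_filter_top proper_filter_bot by blast+
next
  fix x y assume "x \<in> \<Union>C \<and> x \<le> y"
  then show "y \<in> \<Union>C" using assms(2) proper_filter_upward by blast
next
  fix x y assume "x \<in> \<Union>C \<and> y \<in> \<Union>C"
  then obtain F G where "F \<in> C" "G \<in> C" "x \<in> F" "y \<in> G" by blast
  with chain[of F G] have "x \<in> F \<and> y \<in> F \<and> F \<in> C \<or> x \<in> G \<and> y \<in> G \<and> G \<in> C" by blast
  then show "inf x y \<in> \<Union>C" using assms(2) proper_filter_inf by blast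
qed

definition filter_extend :: "'a::boolean_algebra set \<Rightarrow> 'a \<Rightarrow> 'a set" where
  "filter_extend F x = {z. \<exists>m\<in>F. inf m x \<le> z}"

lemma proper_filter_extend:
  assumes F: "proper_filter F" and meets: "\<forall>m\<in>F. inf m x \<noteq> bot"
  shows "proper_filter (filter_extend F x)" "F \<subseteq> filter_extend F x" "x \<in> filter_extend F x"
proof -
  show "F \<subseteq> filter_extend F x" unfolding filter_extend_def by force
  then show "x \<in> filter_extend F x"
    using proper_filter_top[OF F] unfolding filter_extend_def by force
  show "proper_filter (filter_extend F x)"
    unfolding proper_filter_def
  proof (intro conjI allI impI)
    show "top \<in> filter_extend F x"
      using proper_filter_top[OF F] unfolding filter_extend_def by force
    show "bot \<notin> filter_extend F x"
      using meets bot_unique unfolding filter_extend_def by blast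
  next
    fix y z assume "y \<in> filter_extend F x \<and> y \<le> z"
    then show "z \<in> filter_extend F x"
      unfolding filter_extend_def by (blast intro: order_trans)
  next
    fix y z assume "y \<in> filter_extend F x \<and> z \<in> filter_extend F x"
    then obtain m n where mn: "m \<in> F" "n \<in> F" and "inf m x \<le> y" "inf n x \<le> z"
      unfolding filter_extend_def by blast
    have "inf (inf m n) x = inf (inf m x) (inf n x)" by (simp add: inf_aci)
    also have "\<dots> \<le> inf y z" using \<open>inf m x \<le> y\<close> \<open>inf n x \<le> z\<close> by (rule inf_mono)
    finally have "inf (inf m n) x \<le> inf y z" .
    moreover have "inf m n \<in> F" using mn by (rule proper_filter_inf[OF F])
    ultimately show "inf y z \<in> filter_extend F x"
      unfolding filter_extend_def by blast
  qed
qed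

lemma maximal_proper_filter_is_ultrafilter:
  assumes F: "proper_filter F"
    and maximal: "\<And>G. proper_filter G \<Longrightarrow> F \<subseteq> G \<Longrightarrow> G = F"
  shows "ultrafilter F"
  unfolding ultrafilter_iff_proper_filter
proof (intro conjI allI F)
  have disjoint_witness: "\<exists>m\<in>F. inf m z = bot" if "z \<notin> F" for z
    using proper_filter_extend[OF F, of z] maximal that by blast
  fix x
  show "x \<in> F \<or> - x \<in> F"
  proof (rule ccontr)
    assume "\<not> (x \<in> F \<or> - x \<in> F)"
    then obtain m n where "m \<in> F" "n \<in> F" "inf m x = bot" "inf n (- x) = bot"
      using disjoint_witness by blast
    then have "inf m n \<in> F" "m \<le> - x" "n \<le> x"
      using proper_filter_inf[OF F] by (simp_all add: inf_shunt)
    moreover from this(2,3) have "inf m n \<le> inf (- x) x" by (rule inf_mono)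
    ultimately show False
      using proper_filter_bot[OF F] by (simp add: bot_unique)
  qed
qed

lemma ultrafilter_exists:
  fixes a :: "'a::boolean_algebra"
  assumes "a \<noteq> bot"
  obtains F where "ultrafilter F" "a \<in> F"
proof -
  define \<A> where "\<A> = {F::'a set. proper_filter F \<and> a \<in> F}"
  have "proper_filter {y. a \<le> y}"
    using assms unfolding proper_filter_def by (auto simp: bot_unique)
  then have "{y. a \<le> y} \<in> \<A>" unfolding \<A>_def by simp
  moreover have "\<Union>C \<in> \<A>" if "C \<noteq> {}" "subset.chain \<A> C" for C
  proof -
    have "C \<subseteq> \<A>" "\<And>F G. F \<in> C \<Longrightarrow> G \<in> C \<Longrightarrow> F \<subseteq> G \<or> G \<subseteq> F"
      using that(2) unfolding subset.chain_def by auto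
    then have "proper_filter (\<Union>C)" "a \<in> \<Union>C"
      using proper_filter_Union_chain[OF that(1)] that(1) unfolding \<A>_def by auto
    then show ?thesis unfolding \<A>_def by simp
  qed
  ultimately obtain M where "M \<in> \<A>" and maximal: "\<And>G. G \<in> \<A> \<Longrightarrow> M \<subseteq> G \<Longrightarrow> G = M"
    using subset_Zorn_nonempty[of \<A>] by blast
  then have "ultrafilter M" "a \<in> M"
    using maximal_proper_filter_is_ultrafilter[of M] unfolding \<A>_def by blast+
  then show thesis by (rule that)
qed

lemma PS_algebra_mono:
  assumes ps: "PS_algebra f g" and "x \<le> x'" "y \<le> y'"
  shows "f x y \<le> f x' y'" "g x' y' \<le> g x y"
proof -
  from assms(2,3) have x': "x' = sup x x'" and y': "y' = sup y y'" by (simp_all add: sup.absorb2)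
  have "f x y \<le> sup (f x y) (f x' y)" by simp
  also have "\<dots> = f x' y" using ps x' unfolding PS_algebra_def by metis
  also have "\<dots> \<le> sup (f x' y) (f x' y')" by simp
  also have "\<dots> = f x' y'" using ps y' unfolding PS_algebra_def by metis
  finally show "f x y \<le> f x' y'" .
  have "g x' y' = inf (g x y') (g x' y')" using ps x' unfolding PS_algebra_def by metis
  also have "\<dots> \<le> g x y'" by simp
  also have "\<dots> = inf (g x y) (g x y')" using ps y' unfolding PS_algebra_def by metis
  also have "\<dots> \<le> g x y" by simp
  finally show "g x' y' \<le> g x y" .
qed

lemma wMIA_imp_S_sub_Q:
  assumes ps: "PS_algebra f g" and w: "wMIA f g"
  shows "S_sub_Q g f"
  unfolding S_sub_Q_def Ult_def
proof (intro ballI impI)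
  fix U1 U2 U3 :: "'a set"
  assume "U1 \<in> {F. ultrafilter F}" "U2 \<in> {F. ultrafilter F}" "U3 \<in> {F. ultrafilter F}"
  then have u: "ultrafilter U1" "ultrafilter U2" "ultrafilter U3" by simp_all
  assume "S_rel g U1 U2 U3"
  then obtain a b where ab: "a \<in> U1" "b \<in> U3" "g a b \<in> U2" unfolding S_rel_def by blast
  show "Q_rel f U1 U2 U3" unfolding Q_rel_def
  proof clarify
    fix x y assume "x \<in> U1" "y \<in> U3"
    with ab u have "inf x a \<in> U1" "inf y b \<in> U3" by (simp_all add: ultrafilter_inf_iff)
    with u have "inf x a \<noteq> bot" "inf y b \<noteq> bot"
      using proper_filter_bot ultrafilter_is_proper_filter by metis+
    have "g a b \<le> g (inf x a) (inf y b)" using PS_algebra_mono(2)[OF ps] by simp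
    also have "\<dots> \<le> f (inf x a) (inf y b)"
      using w \<open>inf x a \<noteq> bot\<close> \<open>inf y b \<noteq> bot\<close> unfolding wMIA_def by blast
    also have "\<dots> \<le> f x y" using PS_algebra_mono(1)[OF ps] by simp
    finally show "f x y \<in> U2"
      using ab(3) proper_filter_upward[OF ultrafilter_is_proper_filter[OF u(2)]] by blast
  qed
qed

lemma S_sub_Q_imp_wMIA:
  assumes sq: "S_sub_Q g f"
  shows "wMIA f g"
  unfolding wMIA_def
proof (intro allI impI)
  fix x y :: 'a assume nz: "x \<noteq> bot \<and> y \<noteq> bot"
  show "g x y \<le> f x y"
  proof (rule ccontr)
    assume "\<not> g x y \<le> f x y"
    then have "inf (g x y) (- f x y) \<noteq> bot" by (simp add: inf_shunt)
    then obtain U2 where u2: "ultrafilter U2" "g x y \<in> U2" "- f x y \<in> U2"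
      by (metis ultrafilter_exists ultrafilter_inf_iff)
    obtain U1 U3 where u13: "ultrafilter U1" "x \<in> U1" "ultrafilter U3" "y \<in> U3"
      using ultrafilter_exists nz by metis
    have "S_rel g U1 U2 U3" unfolding S_rel_def using u13 u2 by blast
    with sq u2 u13 have "Q_rel f U1 U2 U3" unfolding S_sub_Q_def Ult_def by blast
    then have "f x y \<in> U2" unfolding Q_rel_def using u13 by blast
    with u2 show False by (simp add: ultrafilter_compl_iff)
  qed
qed

theorem wMIA_iff_S_sub_Q:
  assumes "PS_algebra f g"
  shows "wMIA f g \<longleftrightarrow> S_sub_Q g f"
  using wMIA_imp_S_sub_Q[OF assms] S_sub_Q_imp_wMIA by blast

lemma PS_algebra_diamB_boxB: "PS_algebra (diamB B) (boxB B)"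
  unfolding PS_algebra_def diamB_def boxB_def by auto

lemma wMIA_diamB_boxB: "wMIA (diamB B) (boxB B)"
  unfolding wMIA_def diamB_def boxB_def by auto

theorem lemma40:
  shows "(\<forall>(f::'a::boolean_algebra \<Rightarrow> 'a \<Rightarrow> 'a) g. PS_algebra f g \<longrightarrow> (wMIA f g \<longleftrightarrow> S_sub_Q g f))
     \<and> (\<forall>B::'u \<Rightarrow> 'u \<Rightarrow> 'u \<Rightarrow> bool. betweenness_frame (UNIV::'u set) B \<longrightarrow> S_sub_Q (boxB B) (diamB B))"
proof (intro conjI allI impI)
  show "wMIA f g \<longleftrightarrow> S_sub_Q g f" if "PS_algebra f g" for f g :: "'a \<Rightarrow> 'a \<Rightarrow> 'a"
    using that by (rule wMIA_iff_S_sub_Q)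
  show "S_sub_Q (boxB B) (diamB B)" for B :: "'u \<Rightarrow> 'u \<Rightarrow> 'u \<Rightarrow> bool"
    using wMIA_diamB_boxB by (rule wMIA_imp_S_sub_Q[OF PS_algebra_diamB_boxB])
qed

end
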